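(* Let $P$ be a poset, let $e_1:P\to L_1$ and $e_2:P\to L_2$ be join-completions of $P$, and let $f:L_1\to L_2$ be a completely join-preserving map with $f\circ e_1=e_2$. Then $\mathcal{U}_{e_1}\subseteq\mathcal{U}_{e_2}$.
   Context: A join-completion of $P$ is an order embedding $e:P\to L$ into a complete lattice with every $x\in L$ equal to $\bigvee\{e(p):e(p)\le x\}$. For such $e$, $\Gamma_e$ is the standard closure operator on $P$ whose closed sets are the sets $e^{-1}(x^\downarrow)$, $x\in L$, and $\mathcal{U}_e=\{S\subseteq P:\bigvee S\text{ exists in }P\text{ and }\bigvee S\in\Gamma_e(S)\}$ (equivalently, $\bigvee S$ exists and $e(\bigvee S)=\bigvee e[S]$). *)

theory Defs
  imports Main
begin

definition order_embedding :: "('p::order \<Rightarrow> 'l::order) \<Rightarrow> bool" where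
  "order_embedding e \<longleftrightarrow> (\<forall>x y. e x \<le> e y \<longleftrightarrow> x \<le> y)"

definition join_completion :: "('p::order \<Rightarrow> 'l::complete_lattice) \<Rightarrow> bool" where
  "join_completion e \<longleftrightarrow> order_embedding e \<and>
     (\<forall>x. x = Sup {e p | p. e p \<le> x})"

definition Gamma_closed :: "('p \<Rightarrow> 'l::complete_lattice) \<Rightarrow> 'p set set" where
  "Gamma_closed e = {e -` {y. y \<le> x} | x. True}"

definition Gamma :: "('p \<Rightarrow> 'l::complete_lattice) \<Rightarrow> 'p set \<Rightarrow> 'p set" where
  "Gamma e S = \<Inter> {C \<in> Gamma_closed e. S \<subseteq> C}"

definition is_join :: "'p::order set \<Rightarrow> 'p \<Rightarrow> bool" where
  "is_join S s \<longleftrightarrow> (\<forall>x\<in>S. x \<le> s) \<and> (\<forall>u. (\<forall>x\<in>S. x \<le> u) \<longrightarrow> s \<le> u)"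

definition U_sets :: "('p::order \<Rightarrow> 'l::complete_lattice) \<Rightarrow> 'p set set" where
  "U_sets e = {S. \<exists>s. is_join S s \<and> s \<in> Gamma e S}"

definition completely_join_preserving :: "('a::complete_lattice \<Rightarrow> 'b::complete_lattice) \<Rightarrow> bool" where
  "completely_join_preserving f \<longleftrightarrow> (\<forall>A. f (Sup A) = Sup (f ` A))"

end

theory Submission
  imports Defs
begin

(* A set S with join s lies in U_e exactly when e s <= Sup (e ` S). Applying f, which
   preserves joins and hence order, turns this inequality for e1 into the one for e2 = f o e1. *)

lemma Gamma_iff:
  fixes e :: "'p \<Rightarrow> 'l::complete_lattice"
  shows "s \<in> Gamma e S \<longleftrightarrow> e s \<le> Sup (e ` S)"
proof
  assume "s \<in> Gamma e S"
  moreover have "e -` {y. y \<le> Sup (e ` S)} \<in> {C \<in> Gamma_closed e. S \<subseteq> C}"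
    unfolding Gamma_closed_def by (auto intro: Sup_upper)
  ultimately show "e s \<le> Sup (e ` S)" unfolding Gamma_def by blast
next
  assume le: "e s \<le> Sup (e ` S)"
  show "s \<in> Gamma e S" unfolding Gamma_def Gamma_closed_def
  proof clarsimp
    fix x assume "S \<subseteq> {y. e y \<le> x}"
    then have "Sup (e ` S) \<le> x" by (auto intro: Sup_least)
    with le show "e s \<le> x" by simp
  qed
qed

lemma U_sets_iff:
  fixes e :: "'p::order \<Rightarrow> 'l::complete_lattice"
  shows "S \<in> U_sets e \<longleftrightarrow> (\<exists>s. is_join S s \<and> e s \<le> Sup (e ` S))"
  unfolding U_sets_def by (simp add: Gamma_iff)

lemma completely_join_preserving_mono:
  assumes "completely_join_preserving f" and "a \<le> b"
  shows "f a \<le> f b"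
proof -
  have "f b = f (Sup {a, b})" using \<open>a \<le> b\<close> by (simp add: sup_absorb2)
  also have "\<dots> = sup (f a) (f b)"
    using assms(1) unfolding completely_join_preserving_def
    by (metis Sup_insert Sup_empty image_empty image_insert sup_bot.right_neutral)
  finally show ?thesis by (metis sup.cobounded1)
qed

theorem lemma5p9:
  fixes e1 :: "'p::order \<Rightarrow> 'a::complete_lattice"
    and e2 :: "'p \<Rightarrow> 'b::complete_lattice"
    and f :: "'a \<Rightarrow> 'b"
  assumes "join_completion e1"
    and "join_completion e2"
    and "completely_join_preserving f"
    and "f \<circ> e1 = e2"
  shows "U_sets e1 \<subseteq> U_sets e2"
proof
  fix S assume "S \<in> U_sets e1"
  then obtain s where join: "is_join S s" and le: "e1 s \<le> Sup (e1 ` S)"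
    by (auto simp: U_sets_iff)
  have "e2 s = f (e1 s)" using assms(4) by auto
  also have "\<dots> \<le> f (Sup (e1 ` S))"
    using completely_join_preserving_mono[OF assms(3) le] .
  also have "\<dots> = Sup (f ` e1 ` S)"
    using assms(3) unfolding completely_join_preserving_def by simp
  also have "f ` e1 ` S = e2 ` S" using assms(4) by force
  finally show "S \<in> U_sets e2" using join by (auto simp: U_sets_iff)
qed

end
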